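(* There is a universal constant $c>0$ such that for all integers $n,d$ with $2\le d\le n/2$, the optimal MLSI constant $\alpha=\sup_{f>0\ \text{non-constant}}\frac{{\rm Ent}_{\pi_u}(f)}{\mathcal E_{\pi_u}(f,\log f)}$ of $(\Omega^B_n(d),\pi_u,Q_u)$ satisfies $\alpha\ge c\,nd$.
   Context: $\Omega^B_n(d)$ is the set of all simple bipartite $d$-regular graphs on $[n^{(\ell)}]\sqcup[n^{(r)}]$ with uniform distribution $\pi_u$. A simple switching of $G$ picks two edges $(i_1,j_1),(i_2,j_2)$ with $i_1\ne i_2$, $j_1\ne j_2$, deletes them and adds $(i_1,j_2),(i_2,j_1)$, provided the result is simple; $\mathcal N(G)$ is the set of graphs so obtainable. $Q_u(G_1,G_2)=(nd(nd-1)/2)^{-1}$ if $G_2\in\mathcal N(G_1)$, $Q_u(G_1,G_1)=-|\mathcal N(G_1)|/(nd(nd-1)/2)$, else $0$. ${\rm Ent}_\pi(f)=\mathbb E_\pi[f(\log f-\log\mathbb E_\pi f)]$, $\mathcal E_\pi(f,\log f)=\frac12\sum_{G,G'}\pi(G)Q(G,G')(f(G)-f(G'))\log\frac{f(G)}{f(G')}$. *)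

theory Defs
  imports "HOL-Analysis.Analysis"
begin

text \<open>A bipartite graph on left vertices [n] and right vertices [n] is represented by its
edge set, a set of pairs (i,j) with i a left vertex and j a right vertex, i,j in {1..n}.
Representing edges as a set makes the graph simple (no multi-edges).\<close>

type_synonym bgraph = "(nat \<times> nat) set"

definition bip_regular :: "nat \<Rightarrow> nat \<Rightarrow> bgraph \<Rightarrow> bool" where
  "bip_regular n d G \<longleftrightarrow> G \<subseteq> {1..n} \<times> {1..n}
     \<and> (\<forall>i\<in>{1..n}. card {j. (i, j) \<in> G} = d)
     \<and> (\<forall>j\<in>{1..n}. card {i. (i, j) \<in> G} = d)"

definition OmegaB :: "nat \<Rightarrow> nat \<Rightarrow> bgraph set" where
  "OmegaB n d = {G. bip_regular n d G}"

definition switch_nbrs :: "bgraph \<Rightarrow> bgraph set" where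
  "switch_nbrs G = {(G - {(i1, j1), (i2, j2)}) \<union> {(i1, j2), (i2, j1)} | i1 j1 i2 j2.
      (i1, j1) \<in> G \<and> (i2, j2) \<in> G \<and> i1 \<noteq> i2 \<and> j1 \<noteq> j2
      \<and> (i1, j2) \<notin> G \<and> (i2, j1) \<notin> G}"

definition Q_u :: "nat \<Rightarrow> nat \<Rightarrow> bgraph \<Rightarrow> bgraph \<Rightarrow> real" where
  "Q_u n d G1 G2 =
     (let N = real (n * d) * (real (n * d) - 1) / 2 in
      if G2 = G1 then - real (card (switch_nbrs G1)) / N
      else if G2 \<in> switch_nbrs G1 then 1 / N else 0)"

definition pi_u :: "nat \<Rightarrow> nat \<Rightarrow> bgraph \<Rightarrow> real" where
  "pi_u n d G = (if G \<in> OmegaB n d then 1 / real (card (OmegaB n d)) else 0)"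

definition Ent_u :: "nat \<Rightarrow> nat \<Rightarrow> (bgraph \<Rightarrow> real) \<Rightarrow> real" where
  "Ent_u n d f =
     (let m = (\<Sum>G\<in>OmegaB n d. pi_u n d G * f G) in
      (\<Sum>G\<in>OmegaB n d. pi_u n d G * (f G * (ln (f G) - ln m))))"

definition Dir_u :: "nat \<Rightarrow> nat \<Rightarrow> (bgraph \<Rightarrow> real) \<Rightarrow> real" where
  "Dir_u n d f = 1 / 2 * (\<Sum>G\<in>OmegaB n d. \<Sum>G'\<in>OmegaB n d.
      pi_u n d G * Q_u n d G G' * (f G - f G') * ln (f G / f G'))"

definition mlsi_const :: "nat \<Rightarrow> nat \<Rightarrow> ereal" where
  "mlsi_const n d = (SUP f \<in> {f. (\<forall>G\<in>OmegaB n d. f G > 0)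
        \<and> (\<exists>G\<in>OmegaB n d. \<exists>G'\<in>OmegaB n d. f G \<noteq> f G')}.
      ereal (Ent_u n d f / Dir_u n d f))"

end

theory Submission
  imports Defs
begin

(*
  The lower bound comes from a single test function: the indicator-type function f = 2 on B and
  f = 1 elsewhere, where B is the smaller of the two classes of graphs containing, resp. not
  containing, the edge (1,1). With r = |B|/|Omega| <= 1/2 its entropy is 2 r ln 2 - (1+r) ln(1+r) >= r/12,
  while its Dirichlet form is ln 2 times the number of switchings leaving B, divided by
  |Omega| nd(nd-1)/2. A graph has at most nd switchings toggling a fixed edge, so the ratio is
  at least (nd-1)/(24 ln 2) >= nd/40. The circulant graph shows that B has a nonzero boundary.
*)

lemma card_insert_Diff_swap:
  assumes "finite S" "a \<in> S" "b \<notin> S"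
  shows "card (insert b (S - {a})) = card S"
  using assms by (metis Diff_iff card_Suc_Diff1 card_insert_disjoint finite_Diff)

lemma switch_nbrsI:
  assumes "(i1, j1) \<in> G" "(i2, j2) \<in> G" "i1 \<noteq> i2" "j1 \<noteq> j2" "(i1, j2) \<notin> G" "(i2, j1) \<notin> G"
  shows "(G - {(i1, j1), (i2, j2)}) \<union> {(i1, j2), (i2, j1)} \<in> switch_nbrs G"
  using assms unfolding switch_nbrs_def by blast

lemma switch_nbrsE:
  assumes "G' \<in> switch_nbrs G"
  obtains i1 j1 i2 j2 where "G' = (G - {(i1, j1), (i2, j2)}) \<union> {(i1, j2), (i2, j1)}"
    "(i1, j1) \<in> G" "(i2, j2) \<in> G" "i1 \<noteq> i2" "j1 \<noteq> j2" "(i1, j2) \<notin> G" "(i2, j1) \<notin> G"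
  using assms unfolding switch_nbrs_def by blast

lemma switch_nbrs_sym:
  assumes "G' \<in> switch_nbrs G" shows "G \<in> switch_nbrs G'"
  using assms
proof (rule switch_nbrsE)
  fix i1 j1 i2 j2
  assume G': "G' = (G - {(i1, j1), (i2, j2)}) \<union> {(i1, j2), (i2, j1)}"
    and "(i1, j1) \<in> G" "(i2, j2) \<in> G" "i1 \<noteq> i2" "j1 \<noteq> j2" "(i1, j2) \<notin> G" "(i2, j1) \<notin> G"
  then have "G = (G' - {(i1, j2), (i2, j1)}) \<union> {(i1, j1), (i2, j2)}" by auto
  also have "\<dots> \<in> switch_nbrs G'"
    using G' \<open>i1 \<noteq> i2\<close> \<open>j1 \<noteq> j2\<close> \<open>(i1, j2) \<notin> G\<close> \<open>(i2, j1) \<notin> G\<close> by (intro switch_nbrsI) auto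
  finally show ?thesis .
qed

lemma OmegaB_subset: "G \<in> OmegaB n d \<Longrightarrow> G \<subseteq> {1..n} \<times> {1..n}"
  unfolding OmegaB_def bip_regular_def by blast

lemma finite_OmegaB: "finite (OmegaB n d)"
proof (rule finite_subset)
  show "OmegaB n d \<subseteq> Pow ({1..n} \<times> {1..n})" using OmegaB_subset by blast
qed simp

lemma finite_row_OmegaB: "G \<in> OmegaB n d \<Longrightarrow> finite {j. (i, j) \<in> G}"
  by (rule finite_subset[of _ "{1..n}"]) (use OmegaB_subset in auto)

lemma finite_col_OmegaB: "G \<in> OmegaB n d \<Longrightarrow> finite {i. (i, j) \<in> G}"
  by (rule finite_subset[of _ "{1..n}"]) (use OmegaB_subset in auto)

lemma switch_nbrs_OmegaB:
  assumes G: "G \<in> OmegaB n d" and "G' \<in> switch_nbrs G"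
  shows "G' \<in> OmegaB n d"
  using \<open>G' \<in> switch_nbrs G\<close>
proof (rule switch_nbrsE)
  fix i1 j1 i2 j2
  assume h: "G' = (G - {(i1, j1), (i2, j2)}) \<union> {(i1, j2), (i2, j1)}"
    "(i1, j1) \<in> G" "(i2, j2) \<in> G" "i1 \<noteq> i2" "j1 \<noteq> j2" "(i1, j2) \<notin> G" "(i2, j1) \<notin> G"
  have sub: "G \<subseteq> {1..n} \<times> {1..n}" using G by (rule OmegaB_subset)
  have row: "card {j. (i, j) \<in> G'} = card {j. (i, j) \<in> G}" for i
  proof -
    consider "i = i1" | "i = i2" | "i \<noteq> i1" "i \<noteq> i2" by blast
    then show ?thesis
    proof cases
      case 1
      then have "{j. (i, j) \<in> G'} = insert j2 ({j. (i, j) \<in> G} - {j1})" using h by auto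
      then show ?thesis using card_insert_Diff_swap[OF finite_row_OmegaB[OF G], of j1 i j2] h(2,6) 1 by simp
    next
      case 2
      then have "{j. (i, j) \<in> G'} = insert j1 ({j. (i, j) \<in> G} - {j2})" using h by auto
      then show ?thesis using card_insert_Diff_swap[OF finite_row_OmegaB[OF G], of j2 i j1] h(3,7) 2 by simp
    next
      case 3
      then have "{j. (i, j) \<in> G'} = {j. (i, j) \<in> G}" using h by auto
      then show ?thesis by simp
    qed
  qed
  have col: "card {i. (i, j) \<in> G'} = card {i. (i, j) \<in> G}" for j
  proof -
    consider "j = j1" | "j = j2" | "j \<noteq> j1" "j \<noteq> j2" by blast
    then show ?thesis
    proof cases
      case 1
      then have "{i. (i, j) \<in> G'} = insert i2 ({i. (i, j) \<in> G} - {i1})" using h by auto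
      then show ?thesis using card_insert_Diff_swap[OF finite_col_OmegaB[OF G], of i1 j i2] h(2,7) 1 by simp
    next
      case 2
      then have "{i. (i, j) \<in> G'} = insert i1 ({i. (i, j) \<in> G} - {i2})" using h by auto
      then show ?thesis using card_insert_Diff_swap[OF finite_col_OmegaB[OF G], of i2 j i1] h(3,6) 2 by simp
    next
      case 3
      then have "{i. (i, j) \<in> G'} = {i. (i, j) \<in> G}" using h by auto
      then show ?thesis by simp
    qed
  qed
  have "(i1, j2) \<in> {1..n} \<times> {1..n}" "(i2, j1) \<in> {1..n} \<times> {1..n}" using sub h(2,3) by auto
  then have "G' \<subseteq> {1..n} \<times> {1..n}" using h(1) sub by blast
  then show ?thesis using G unfolding OmegaB_def bip_regular_def mem_Collect_eq row col by blast
qed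

lemma card_row_OmegaB_le:
  assumes "G \<in> OmegaB n d" shows "card {j. (i, j) \<in> G} \<le> d"
proof (cases "i \<in> {1..n}")
  case False
  then have "{j. (i, j) \<in> G} = {}" using OmegaB_subset[OF assms] by auto
  then show ?thesis by simp
qed (use assms in \<open>simp add: OmegaB_def bip_regular_def\<close>)

lemma card_col_OmegaB_le: "G \<in> OmegaB n d \<Longrightarrow> card {i. (i, j) \<in> G} \<le> n"
  by (rule order_trans[OF card_mono[of "{1..n}"]]) (use OmegaB_subset in auto)

lemma card_OmegaB_edges: "G \<in> OmegaB n d \<Longrightarrow> card G = n * d"
proof -
  assume G: "G \<in> OmegaB n d"
  then have "G = Sigma {1..n} (\<lambda>i. {j. (i, j) \<in> G})" using OmegaB_subset by blast
  then have "card G = (\<Sum>i\<in>{1..n}. card {j. (i, j) \<in> G})"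
    using finite_row_OmegaB[OF G] by (metis card_SigmaI finite_atLeastAtMost)
  also have "\<dots> = n * d" using G by (simp add: OmegaB_def bip_regular_def)
  finally show ?thesis .
qed

lemma switch_nbrs_removing_edge_subset:
  assumes "(a, b) \<in> G"
  shows "{G' \<in> switch_nbrs G. (a, b) \<notin> G'}
    \<subseteq> (\<lambda>(i, j). (G - {(a, b), (i, j)}) \<union> {(a, j), (i, b)}) ` G"
proof safe
  fix G' assume "G' \<in> switch_nbrs G" "(a, b) \<notin> G'"
  then show "G' \<in> (\<lambda>(i, j). (G - {(a, b), (i, j)}) \<union> {(a, j), (i, b)}) ` G"
  proof (elim switch_nbrsE)
    fix i1 j1 i2 j2
    assume h: "G' = (G - {(i1, j1), (i2, j2)}) \<union> {(i1, j2), (i2, j1)}" "(i1, j1) \<in> G" "(i2, j2) \<in> G"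
    then have "(a, b) = (i1, j1) \<or> (a, b) = (i2, j2)" using assms \<open>(a, b) \<notin> G'\<close> by blast
    then show ?thesis
    proof
      assume "(a, b) = (i1, j1)"
      then show ?thesis using h by (auto simp: image_iff intro!: bexI[of _ "(i2, j2)"])
    next
      assume "(a, b) = (i2, j2)"
      then show ?thesis using h by (auto simp: image_iff insert_commute intro!: bexI[of _ "(i1, j1)"])
    qed
  qed
qed

lemma switch_nbrs_adding_edge_subset:
  assumes "(a, b) \<notin> G"
  shows "{G' \<in> switch_nbrs G. (a, b) \<in> G'}
    \<subseteq> (\<lambda>(j, i). (G - {(a, j), (i, b)}) \<union> {(a, b), (i, j)}) ` ({j. (a, j) \<in> G} \<times> {i. (i, b) \<in> G})"
proof safe
  fix G' assume "G' \<in> switch_nbrs G" "(a, b) \<in> G'"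
  then show "G' \<in> (\<lambda>(j, i). (G - {(a, j), (i, b)}) \<union> {(a, b), (i, j)}) ` ({j. (a, j) \<in> G} \<times> {i. (i, b) \<in> G})"
  proof (elim switch_nbrsE)
    fix i1 j1 i2 j2
    assume h: "G' = (G - {(i1, j1), (i2, j2)}) \<union> {(i1, j2), (i2, j1)}" "(i1, j1) \<in> G" "(i2, j2) \<in> G"
    then have "(a, b) = (i1, j2) \<or> (a, b) = (i2, j1)" using assms \<open>(a, b) \<in> G'\<close> by blast
    then show ?thesis
    proof
      assume "(a, b) = (i1, j2)"
      then show ?thesis using h by (auto simp: image_iff intro!: bexI[of _ "(j1, i2)"])
    next
      assume "(a, b) = (i2, j1)"
      then show ?thesis using h by (auto simp: image_iff insert_commute intro!: bexI[of _ "(j2, i1)"])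
    qed
  qed
qed

lemma card_switch_nbrs_toggling_le:
  assumes G: "G \<in> OmegaB n d"
  shows "card {G' \<in> switch_nbrs G. (e \<in> G') \<noteq> (e \<in> G)} \<le> n * d"
proof (cases e)
  case (Pair a b)
  have finG: "finite G" using OmegaB_subset[OF G] by (rule finite_subset) simp
  show ?thesis
  proof (cases "(a, b) \<in> G")
    case True
    then have "{G' \<in> switch_nbrs G. (e \<in> G') \<noteq> (e \<in> G)} = {G' \<in> switch_nbrs G. (a, b) \<notin> G'}"
      using Pair by auto
    also have "card \<dots> \<le> card ((\<lambda>(i, j). (G - {(a, b), (i, j)}) \<union> {(a, j), (i, b)}) ` G)"
      using finG by (intro card_mono switch_nbrs_removing_edge_subset True finite_imageI)
    also have "\<dots> \<le> card G" using finG by (rule card_image_le)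
    finally show ?thesis using card_OmegaB_edges[OF G] by simp
  next
    case False
    let ?R = "{j. (a, j) \<in> G}" and ?C = "{i. (i, b) \<in> G}"
    have fin: "finite (?R \<times> ?C)" using finite_row_OmegaB[OF G] finite_col_OmegaB[OF G] by blast
    from False have "{G' \<in> switch_nbrs G. (e \<in> G') \<noteq> (e \<in> G)} = {G' \<in> switch_nbrs G. (a, b) \<in> G'}"
      using Pair by auto
    also have "card \<dots> \<le> card ((\<lambda>(j, i). (G - {(a, j), (i, b)}) \<union> {(a, b), (i, j)}) ` (?R \<times> ?C))"
      using fin by (intro card_mono switch_nbrs_adding_edge_subset False finite_imageI)
    also have "\<dots> \<le> card (?R \<times> ?C)" using fin by (rule card_image_le)
    also have "\<dots> \<le> d * n"
      unfolding card_cartesian_product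
      using card_row_OmegaB_le[OF G] card_col_OmegaB_le[OF G] by (rule mult_le_mono)
    finally show ?thesis by (simp add: mult.commute)
  qed
qed

lemma eq_of_dvd_diff_in_range:
  assumes "x \<in> {1..n}" "y \<in> {1..n}" "int n dvd int x - int y"
  shows "x = y"
proof (rule ccontr)
  assume "x \<noteq> y"
  then have "\<bar>int n\<bar> \<le> \<bar>int x - int y\<bar>" using assms(3) by (intro dvd_imp_le_int) auto
  moreover have "\<bar>int x - int y\<bar> < int n" using assms(1,2) by auto
  ultimately show False by simp
qed

lemma card_lt_of_inj_on_residues:
  fixes g :: "nat \<Rightarrow> int"
  assumes inj: "inj_on g {1..n}" and range: "\<And>x. x \<in> {1..n} \<Longrightarrow> g x \<in> {0..<int n}" and "d \<le> n"
  shows "card {x\<in>{1..n}. g x < int d} = d"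
proof -
  have onto: "g ` {1..n} = {0..<int n}"
    using range card_image[OF inj] by (intro card_subset_eq) auto
  have "g ` {x\<in>{1..n}. g x < int d} = {0..<int d}"
  proof (intro equalityI subsetI)
    fix k assume k: "k \<in> {0..<int d}"
    then have "k \<in> g ` {1..n}" using onto \<open>d \<le> n\<close> by auto
    then show "k \<in> g ` {x\<in>{1..n}. g x < int d}" using k by auto
  qed (use range in auto)
  moreover have "inj_on g {x\<in>{1..n}. g x < int d}" using inj by (rule inj_on_subset) auto
  ultimately show ?thesis using card_image by fastforce
qed

definition circulant :: "nat \<Rightarrow> nat \<Rightarrow> bgraph" where
  "circulant n d = {(i, j) \<in> {1..n} \<times> {1..n}. (int j - int i) mod int n < int d}"

lemma circulant_in_OmegaB:
  assumes "d \<le> n" shows "circulant n d \<in> OmegaB n d"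
proof -
  have "card {j. (i, j) \<in> circulant n d} = d" if "i \<in> {1..n}" for i
  proof -
    have "inj_on (\<lambda>j. (int j - int i) mod int n) {1..n}"
      by (rule inj_onI, rule eq_of_dvd_diff_in_range) (auto simp: mod_eq_dvd_iff)
    then have "card {j\<in>{1..n}. (int j - int i) mod int n < int d} = d"
      by (rule card_lt_of_inj_on_residues[OF _ _ assms]) auto
    moreover have "{j. (i, j) \<in> circulant n d} = {j\<in>{1..n}. (int j - int i) mod int n < int d}"
      using that unfolding circulant_def by auto
    ultimately show ?thesis by simp
  qed
  moreover have "card {i. (i, j) \<in> circulant n d} = d" if "j \<in> {1..n}" for j
  proof -
    have "inj_on (\<lambda>i. (int j - int i) mod int n) {1..n}"
    proof (rule inj_onI, rule eq_of_dvd_diff_in_range)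
      fix i1 i2 assume "(int j - int i1) mod int n = (int j - int i2) mod int n"
      then have "int n dvd int i2 - int i1" by (simp add: mod_eq_dvd_iff)
      then show "int n dvd int i1 - int i2" by (simp add: dvd_diff_commute)
    qed
    then have "card {i\<in>{1..n}. (int j - int i) mod int n < int d} = d"
      by (rule card_lt_of_inj_on_residues[OF _ _ assms]) auto
    moreover have "{i. (i, j) \<in> circulant n d} = {i\<in>{1..n}. (int j - int i) mod int n < int d}"
      using that unfolding circulant_def by auto
    ultimately show ?thesis by simp
  qed
  ultimately show ?thesis unfolding OmegaB_def bip_regular_def circulant_def by auto
qed

lemma exists_switch_removing_edge:
  assumes "0 < d" "d < n"
  shows "\<exists>G\<in>OmegaB n d. \<exists>G'\<in>switch_nbrs G. (1, 1) \<in> G \<and> (1, 1) \<notin> G'"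
proof -
  let ?C = "circulant n d" and ?i = "n - d + 1"
  have "(1, 1) \<in> ?C" "(?i, n) \<in> ?C" "(1, n) \<notin> ?C" "(?i, 1) \<notin> ?C"
    using assms by (auto simp: circulant_def of_nat_diff zmod_minus1)
  then have "(?C - {(1, 1), (?i, n)}) \<union> {(1, n), (?i, 1)} \<in> switch_nbrs ?C"
    using assms by (intro switch_nbrsI) auto
  moreover have "(1, 1) \<notin> (?C - {(1, 1), (?i, n)}) \<union> {(1, n), (?i, 1)}" using assms by auto
  ultimately show ?thesis using circulant_in_OmegaB[of d n] \<open>(1, 1) \<in> ?C\<close> assms by (meson less_imp_le)
qed

definition switch_boundary :: "nat \<Rightarrow> nat \<Rightarrow> bgraph set \<Rightarrow> nat" where
  "switch_boundary n d B = card {(G, G') \<in> B \<times> (OmegaB n d - B). G' \<in> switch_nbrs G}"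

lemma switch_boundary_edge_class_le:
  assumes B: "B = {G \<in> OmegaB n d. (e \<in> G) = b}"
  shows "switch_boundary n d B \<le> card B * (n * d)"
proof -
  have "{(G, G') \<in> B \<times> (OmegaB n d - B). G' \<in> switch_nbrs G}
      = (SIGMA G:B. {G' \<in> switch_nbrs G. (e \<in> G') \<noteq> (e \<in> G)})"
    using B switch_nbrs_OmegaB by blast
  moreover have "finite B" using B finite_OmegaB by simp
  moreover have "finite (switch_nbrs G)" if "G \<in> B" for G
    using that B switch_nbrs_OmegaB by (intro finite_subset[OF _ finite_OmegaB]) blast
  ultimately have "switch_boundary n d B = (\<Sum>G\<in>B. card {G' \<in> switch_nbrs G. (e \<in> G') \<noteq> (e \<in> G)})"
    unfolding switch_boundary_def by simp
  also have "\<dots> \<le> (\<Sum>G\<in>B. n * d)" by (intro sum_mono card_switch_nbrs_toggling_le) (use B in auto)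
  finally show ?thesis by simp
qed

lemma switch_boundary_edge_class_pos:
  assumes "0 < d" "d < n" and B: "B = {G \<in> OmegaB n d. ((1, 1) \<in> G) = b}"
  shows "0 < switch_boundary n d B"
proof -
  obtain G0 G1 where G0: "G0 \<in> OmegaB n d" and G1: "G1 \<in> switch_nbrs G0"
    and "(1, 1) \<in> G0" "(1, 1) \<notin> G1"
    using exists_switch_removing_edge[OF assms(1,2)] by blast
  have "G1 \<in> OmegaB n d" using G0 G1 by (rule switch_nbrs_OmegaB)
  then have "(G0, G1) \<in> {(G, G') \<in> B \<times> (OmegaB n d - B). G' \<in> switch_nbrs G}
      \<or> (G1, G0) \<in> {(G, G') \<in> B \<times> (OmegaB n d - B). G' \<in> switch_nbrs G}"
    using B G0 G1 switch_nbrs_sym[OF G1] \<open>(1, 1) \<in> G0\<close> \<open>(1, 1) \<notin> G1\<close> by (cases b) auto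
  moreover have "finite {(G, G') \<in> B \<times> (OmegaB n d - B). G' \<in> switch_nbrs G}"
    using B finite_OmegaB by (auto intro: finite_subset[of _ "OmegaB n d \<times> OmegaB n d"])
  ultimately show ?thesis unfolding switch_boundary_def by (auto simp: card_gt_0_iff)
qed

lemma exists_small_class:
  fixes P :: "'a \<Rightarrow> bool"
  assumes "finite A" shows "\<exists>b. 2 * card {x \<in> A. P x = b} \<le> card A"
proof -
  have "{x \<in> A. P x = True} \<union> {x \<in> A. P x = False} = A" by auto
  then have "card {x \<in> A. P x = True} + card {x \<in> A. P x = False} = card A"
    using assms by (metis (no_types, lifting) card_Un_disjoint disjoint_iff finite_Un mem_Collect_eq)
  then have "2 * card {x \<in> A. P x = True} \<le> card A \<or> 2 * card {x \<in> A. P x = False} \<le> card A"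
    by linarith
  then show ?thesis by blast
qed

lemma ln_le_half_diff_inverse:
  fixes y :: real assumes "1 \<le> y" shows "ln y \<le> (y - 1 / y) / 2"
proof -
  have "(\<lambda>y. (y - 1 / y) / 2 - ln y) 1 \<le> (\<lambda>y. (y - 1 / y) / 2 - ln y) y"
  proof (rule DERIV_nonneg_imp_nondecreasing[OF assms])
    fix x :: real assume x: "1 \<le> x" "x \<le> y"
    have "DERIV (\<lambda>y. (y - 1 / y) / 2 - ln y) x :> (1 + 1 / x^2) / 2 - 1 / x"
      using x by (auto intro!: derivative_eq_intros simp: power2_eq_square field_simps)
    moreover have "(1 + 1 / x^2) / 2 - 1 / x = (1 - 1 / x)^2 / 2"
      using x by (simp add: power2_eq_square field_simps)
    ultimately show "\<exists>D. DERIV (\<lambda>y. (y - 1 / y) / 2 - ln y) x :> D \<and> D \<ge> 0" by force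
  qed
  then show ?thesis by simp
qed

lemma two_point_entropy_ge:
  fixes r :: real assumes "0 \<le> r" "r \<le> 1 / 2"
  shows "r / 12 \<le> 2 * r * ln 2 - (1 + r) * ln (1 + r)"
proof -
  have "(1 + r) * ln (1 + r) \<le> (1 + r) * (((1 + r) - 1 / (1 + r)) / 2)"
    using assms ln_le_half_diff_inverse[of "1 + r"] by (intro mult_left_mono) auto
  also have "\<dots> = r + r^2 / 2" using assms by (simp add: field_simps power2_eq_square)
  finally have "(1 + r) * ln (1 + r) \<le> r + r^2 / 2" .
  moreover have "r^2 \<le> r / 2" using assms mult_left_mono[of r "1/2" r] by (simp add: power2_eq_square)
  moreover have "r * (2 / 3) \<le> r * ln 2" using ln2_ge_two_thirds assms by (intro mult_left_mono) auto
  ultimately show ?thesis by linarith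
qed

definition cut_fun :: "bgraph set \<Rightarrow> bgraph \<Rightarrow> real" where
  "cut_fun B G = (if G \<in> B then 2 else 1)"

(* The normalisation N of Q_u: the number of unordered pairs of the nd edges. *)
definition edge_pairs :: "nat \<Rightarrow> nat \<Rightarrow> real" where
  "edge_pairs n d = real (n * d) * (real (n * d) - 1) / 2"

lemma edge_pairs_nonneg: "0 \<le> edge_pairs n d"
  by (cases "n * d") (auto simp: edge_pairs_def)

lemma Q_u_off_diagonal:
  "G' \<noteq> G \<Longrightarrow> Q_u n d G G' = (if G' \<in> switch_nbrs G then 1 / edge_pairs n d else 0)"
  by (simp add: Q_u_def edge_pairs_def)

lemma sum_if_mem:
  assumes "finite A" "B \<subseteq> A"
  shows "(\<Sum>x\<in>A. if x \<in> B then a else b) = real (card B) * a + (real (card A) - real (card B)) * (b :: real)"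
proof -
  have "(\<Sum>x\<in>A. if x \<in> B then a else b) = real (card B) * a + real (card (A - B)) * b"
    using assms by (simp add: sum.If_cases Int_absorb1 Diff_eq[symmetric])
  then show ?thesis using assms by (simp add: card_Diff_subset finite_subset card_mono of_nat_diff)
qed

lemma Ent_u_cut_fun:
  assumes B: "B \<subseteq> OmegaB n d" and "OmegaB n d \<noteq> {}"
  defines "r \<equiv> real (card B) / real (card (OmegaB n d))"
  shows "Ent_u n d (cut_fun B) = 2 * r * ln 2 - (1 + r) * ln (1 + r)"
proof -
  let ?K = "real (card (OmegaB n d))" and ?k = "real (card B)"
  have K: "?K > 0" using assms(2) finite_OmegaB by (simp add: card_gt_0_iff)
  have pi: "pi_u n d G = 1 / ?K" if "G \<in> OmegaB n d" for G using that by (simp add: pi_u_def)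
  have "(\<Sum>G\<in>OmegaB n d. pi_u n d G * cut_fun B G) = (\<Sum>G\<in>OmegaB n d. if G \<in> B then 2 / ?K else 1 / ?K)"
    by (intro sum.cong) (auto simp: pi cut_fun_def)
  also have "\<dots> = 1 + r"
    using K unfolding sum_if_mem[OF finite_OmegaB B] r_def by (simp add: field_simps)
  finally have mean: "(\<Sum>G\<in>OmegaB n d. pi_u n d G * cut_fun B G) = 1 + r" .
  have "Ent_u n d (cut_fun B)
      = (\<Sum>G\<in>OmegaB n d. if G \<in> B then 2 * (ln 2 - ln (1 + r)) / ?K else - ln (1 + r) / ?K)"
    unfolding Ent_u_def Let_def mean by (intro sum.cong) (auto simp: pi cut_fun_def)
  also have "\<dots> = 2 * r * ln 2 - (1 + r) * ln (1 + r)"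
    using K unfolding sum_if_mem[OF finite_OmegaB B] r_def by (simp add: field_simps)
  finally show ?thesis .
qed

lemma Dir_u_cut_fun:
  assumes B: "B \<subseteq> OmegaB n d"
  shows "Dir_u n d (cut_fun B)
    = ln 2 * real (switch_boundary n d B) / (real (card (OmegaB n d)) * edge_pairs n d)"
proof -
  let ?\<Omega> = "OmegaB n d"
  define c where "c = ln 2 / (real (card ?\<Omega>) * edge_pairs n d)"
  define P where "P = {(G, G') \<in> B \<times> (?\<Omega> - B). G' \<in> switch_nbrs G}"
  define S where "S = P \<union> prod.swap ` P"
  have S_sub: "S \<subseteq> ?\<Omega> \<times> ?\<Omega>" using B unfolding S_def P_def by auto
  have finP: "finite P"
    using S_sub unfolding S_def by (meson finite_OmegaB finite_SigmaI finite_subset le_supE)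
  have summand: "pi_u n d G * Q_u n d G G' * (cut_fun B G - cut_fun B G') * ln (cut_fun B G / cut_fun B G')
      = (if (G, G') \<in> S then c else 0)" if "G \<in> ?\<Omega>" "G' \<in> ?\<Omega>" for G G'
  proof (cases "(G \<in> B) = (G' \<in> B)")
    case True
    then show ?thesis unfolding S_def P_def cut_fun_def by auto
  next
    case False
    then have "G' \<noteq> G" by auto
    moreover have "(cut_fun B G - cut_fun B G') * ln (cut_fun B G / cut_fun B G') = ln 2"
      using False by (auto simp: cut_fun_def ln_div)
    moreover have "(G, G') \<in> S \<longleftrightarrow> G' \<in> switch_nbrs G"
      using False that switch_nbrs_sym unfolding S_def P_def by auto
    ultimately show ?thesis using that
      by (simp add: Q_u_off_diagonal pi_u_def c_def)
  qed
  have "card S = 2 * card P"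
  proof -
    have "P \<inter> prod.swap ` P = {}" unfolding P_def by auto
    then show ?thesis using finP unfolding S_def by (simp add: card_Un_disjoint card_image)
  qed
  have "Dir_u n d (cut_fun B) = 1 / 2 * (\<Sum>(G, G')\<in>?\<Omega> \<times> ?\<Omega>. if (G, G') \<in> S then c else 0)"
    unfolding Dir_u_def sum.cartesian_product
    by (intro arg_cong[where f = "\<lambda>t. 1 / 2 * t"] sum.cong) (auto simp: summand)
  also have "\<dots> = c * card P"
    using sum_if_mem[OF _ S_sub, of c 0] finite_OmegaB \<open>card S = 2 * card P\<close>
    by (simp add: split_beta')
  finally show ?thesis unfolding c_def P_def switch_boundary_def by simp
qed

lemma mlsi_const_ge_cut:
  assumes B: "B \<subseteq> OmegaB n d" and half: "2 * card B \<le> card (OmegaB n d)"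
    and boundary: "0 < switch_boundary n d B"
  shows "ereal (real (card B) * edge_pairs n d / (12 * ln 2 * real (switch_boundary n d B)))
    \<le> mlsi_const n d"
proof -
  let ?K = "real (card (OmegaB n d))" and ?k = "real (card B)"
    and ?s = "real (switch_boundary n d B)" and ?N = "edge_pairs n d"
  define r where "r = ?k / ?K"
  obtain G G' where G: "G \<in> B" and G': "G' \<in> OmegaB n d - B"
    using boundary unfolding switch_boundary_def by (auto simp: card_gt_0_iff)
  then have "OmegaB n d \<noteq> {}" by blast
  then have K: "?K > 0" using finite_OmegaB by (simp add: card_gt_0_iff)
  have "0 \<le> r" "r \<le> 1 / 2" using half K unfolding r_def by (auto simp: field_simps)
  then have "r / 12 \<le> Ent_u n d (cut_fun B)"
    using Ent_u_cut_fun[OF B \<open>OmegaB n d \<noteq> {}\<close>] two_point_entropy_ge unfolding r_def[symmetric] by simp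
  have "?k * ?N / (12 * ln 2 * ?s) = (r / 12) * (?K * ?N) / (ln 2 * ?s)"
    using K unfolding r_def by (simp add: field_simps)
  also have "\<dots> \<le> Ent_u n d (cut_fun B) * (?K * ?N) / (ln 2 * ?s)"
    using \<open>r / 12 \<le> Ent_u n d (cut_fun B)\<close> K edge_pairs_nonneg
    by (intro divide_right_mono mult_right_mono) auto
  also have "\<dots> = Ent_u n d (cut_fun B) / Dir_u n d (cut_fun B)"
    unfolding Dir_u_cut_fun[OF B] by simp
  finally have "ereal (?k * ?N / (12 * ln 2 * ?s)) \<le> ereal (Ent_u n d (cut_fun B) / Dir_u n d (cut_fun B))"
    by simp
  also have "\<dots> \<le> mlsi_const n d"
    unfolding mlsi_const_def using B G G' by (intro SUP_upper) (auto simp: cut_fun_def)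
  finally show ?thesis .
qed

lemma cut_ratio_ge:
  fixes s k x :: real
  assumes "0 < s" "s \<le> k * x" "0 < k" "8 \<le> x"
  shows "x / 40 \<le> k * (x * (x - 1) / 2) / (12 * ln 2 * s)"
proof -
  have "x * (ln 2 * 24) \<le> x * (50 / 3)" using ln2_le_25_over_36 assms(4) by (intro mult_left_mono) auto
  then have "40 + x * (ln 2 * 24) \<le> x * 40" using assms(4) by linarith
  then have "x / 40 \<le> (x - 1) / (24 * ln 2)"
    using ln2_ge_two_thirds by (simp add: field_simps)
  also have "\<dots> = k * (x * (x - 1) / 2) / (12 * ln 2 * (k * x))"
    using assms by (simp add: field_simps)
  also have "\<dots> \<le> k * (x * (x - 1) / 2) / (12 * ln 2 * s)"
    using assms ln2_ge_two_thirds by (intro divide_left_mono mult_left_mono mult_nonneg_nonneg) auto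
  finally show ?thesis .
qed

theorem mainTheorem5:
  shows "\<exists>c::real. c > 0 \<and> (\<forall>n d::nat. 2 \<le> d \<and> real d \<le> real n / 2 \<longrightarrow>
           mlsi_const n d \<ge> ereal (c * real n * real d))"
proof (intro exI[of _ "1 / 40"] conjI allI impI)
  fix n d :: nat
  assume "2 \<le> d \<and> real d \<le> real n / 2"
  then have "0 < d" "d < n" "8 \<le> real (n * d)"
    using mult_le_mono[of 4 n 2 d] by (auto simp flip: of_nat_mult)
  obtain b where half: "2 * card {G \<in> OmegaB n d. ((1, 1) \<in> G) = b} \<le> card (OmegaB n d)"
    using exists_small_class[OF finite_OmegaB] by blast
  define B where "B = {G \<in> OmegaB n d. ((1, 1) \<in> G) = b}"
  have "0 < switch_boundary n d B"
    using switch_boundary_edge_class_pos[OF \<open>0 < d\<close> \<open>d < n\<close> B_def] .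
  moreover have "switch_boundary n d B \<le> card B * (n * d)"
    using switch_boundary_edge_class_le[OF B_def] .
  ultimately have "real (n * d) / 40
      \<le> real (card B) * edge_pairs n d / (12 * ln 2 * real (switch_boundary n d B))"
    unfolding edge_pairs_def using \<open>8 \<le> real (n * d)\<close>
    by (intro cut_ratio_ge) (auto simp flip: of_nat_mult intro: gr0I)
  also have "\<dots> \<le> mlsi_const n d"
    using mlsi_const_ge_cut[of B] half \<open>0 < switch_boundary n d B\<close> unfolding B_def by auto
  finally show "ereal (1 / 40 * real n * real d) \<le> mlsi_const n d" by simp
qed simp

end
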